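(* Consider a trajectory $\mathbf A(t)$, $t\ge0$, of the proto-cell ODE system described in the context. Let $\mathbf b$ be a moiety or a positive linear combination of moieties which is fed with some nutrient flux ($\mathbf b^T\mathbf f_{nu}>0$, i.e. $\mathscr S_{nu}\cap\mathrm{supp}(\mathbf b)\neq\varnothing$), and suppose that along the trajectory the concentrations of all species of $\mathscr S_{me}$ admit strictly positive lower bounds for all $t\ge0$. Then $\mathbf b^T\mathbf A(t)$ is bounded above for $t\ge0$. In particular, the cytoplasmic density $D(t)=\mathbf m^T\mathbf A(t)$ is bounded.
   Context: A chemical reaction network (CRN) has species $\mathscr S=\{A_0,\dots,A_{N-1}\}$ and $R$ reactions, with $N\times R$ stoichiometry matrix $S$. It is conservative: there is $\mathbf m\in\mathbb R^N$ with all $m_i>0$ and $\mathbf m^TS=0$. Let $p=\dim\ker(S^T)\ge 1$. The set $\{\mathbf b\in\mathbb R^N_{\ge 0}:\mathbf b^TS=0\}$ is a pointed convex cone; a set of moieties is a family of $p$ linearly independent generating vectors of this cone forming a basis of $\ker(S^T)$. The support $\mathrm{supp}(\mathbf b)$ of a nonnegative vector $\mathbf b$ is the set of species $A_i$ with $b_i\neq 0$. Proto-cell ODE: the concentration vector $\mathbf A(t)\in\mathbb R^N_{\ge0}$ (component $[A_i]$) satisfies $$\frac{d\mathbf A}{dt}=S\mathbf f(\mathbf A)+\mathbf f_{nu}(\mathbf A)-\mathbf f_{me}(\mathbf A)-\lambda(\mathbf A)\mathbf A,$$ where: $\mathbf f(\mathbf A)\in\mathbb R^R_{\ge0}$ is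 the vector of reaction rates; one species $A_{me}$ is the membrane precursor and $\mathscr S_{me}\subseteq\mathscr S$ is a set of species containing $A_{me}$; $\mathbf f_{me}(\mathbf A)$ has a single nonzero component, along $A_{me}$, equal to a scalar $f_{me}(\mathbf A)$ which depends only on the concentrations of species in $\mathscr S_{me}$, is continuous and monotonically increasing in these concentrations, satisfies $f_{me}(\mathbf 0)=0$, and is $>0$ iff all species of $\mathscr S_{me}$ have positive concentration; $C_{me}>0$ is a constant and $\lambda(\mathbf A)=f_{me}(\mathbf A)/C_{me}$ is the growth rate; $\mathscr S_{nu}\subseteq\mathscr S$ is the set of nutrients and $\mathbf f_{nu}$ has nonzero components only along species of $\mathscr S_{nu}$, being either (i) a constant vector with $f_{nu,i}>0$ for $A_i\in\mathscr S_{nu}$, or (ii) given by $f_{nu,i}=\mathcal D_i([A_{i,out}]-[A_i])/(1+[A_{i,out}]/K_{i,out})$ for $A_i\in\mathscr S_{nu}$, with positive constants $\mathcal D_i$, $[A_{i,out}]$, $K_{i,out}$. *)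

theory Defs
  imports "HOL-Analysis.Analysis"
begin

text \<open>Species are indexed by a finite type 'n, reactions by a finite type 'r.
  The stoichiometry matrix S is an N x R matrix: S :: real^'r^'n.
  For a row vector b, b^T S is written b v* S.\<close>

definition nonneg_vec :: "real^'n \<Rightarrow> bool" where
  "nonneg_vec x \<longleftrightarrow> (\<forall>i. 0 \<le> x $ i)"

definition supp :: "real^'n \<Rightarrow> 'n set" where
  "supp b = {i. b $ i \<noteq> 0}"

definition cons_cone :: "real^'r^'n \<Rightarrow> (real^'n) set" where
  "cons_cone S = {b. nonneg_vec b \<and> b v* S = 0}"

definition nonneg_comb :: "(real^'n) set \<Rightarrow> (real^'n) set" where
  "nonneg_comb B = {x. \<exists>c. (\<forall>v\<in>B. 0 \<le> c v) \<and> x = (\<Sum>v\<in>B. c v *\<^sub>R v)}"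

definition moiety_set :: "real^'r^'n \<Rightarrow> (real^'n) set \<Rightarrow> bool" where
  "moiety_set S B \<longleftrightarrow>
     finite B \<and> B \<subseteq> cons_cone S \<and> independent B \<and>
     span B = {x. x v* S = 0} \<and>
     nonneg_comb B = cons_cone S"

definition pos_comb_moieties :: "(real^'n) set \<Rightarrow> real^'n \<Rightarrow> bool" where
  "pos_comb_moieties B b \<longleftrightarrow>
     (\<exists>c. (\<forall>v\<in>B. 0 \<le> c v) \<and> (\<exists>v\<in>B. 0 < c v) \<and> b = (\<Sum>v\<in>B. c v *\<^sub>R v))"

definition membrane_rate :: "'n set \<Rightarrow> (real^'n \<Rightarrow> real) \<Rightarrow> bool" where
  "membrane_rate Sme fme \<longleftrightarrow>
     (\<forall>x y. (\<forall>i\<in>Sme. x $ i = y $ i) \<longrightarrow> fme x = fme y) \<and>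
     continuous_on {x. nonneg_vec x} fme \<and>
     (\<forall>x y. nonneg_vec x \<and> nonneg_vec y \<and> (\<forall>i\<in>Sme. x $ i \<le> y $ i) \<longrightarrow> fme x \<le> fme y) \<and>
     fme 0 = 0 \<and>
     (\<forall>x. nonneg_vec x \<longrightarrow> (0 < fme x \<longleftrightarrow> (\<forall>i\<in>Sme. 0 < x $ i)))"

definition fme_vec :: "'n \<Rightarrow> (real^'n \<Rightarrow> real) \<Rightarrow> real^'n \<Rightarrow> real^'n" where
  "fme_vec me fme x = (\<chi> i. if i = me then fme x else 0)"

definition nutrient_flux :: "'n set \<Rightarrow> (real^'n \<Rightarrow> real^'n) \<Rightarrow> bool" where
  "nutrient_flux Snu fnu \<longleftrightarrow>
     (\<exists>c. (\<forall>x. fnu x = c) \<and> (\<forall>i\<in>Snu. 0 < c $ i) \<and> (\<forall>i. i \<notin> Snu \<longrightarrow> c $ i = 0)) \<or>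
     (\<exists>Dc Aout K. (\<forall>i\<in>Snu. 0 < Dc i \<and> 0 < Aout i \<and> 0 < K i) \<and>
        (\<forall>x. fnu x = (\<chi> i. if i \<in> Snu then Dc i * (Aout i - x $ i) / (1 + Aout i / K i) else 0)))"

end

theory Submission imports Defs begin

text \<open>Every nonnegative conservation law w (in particular b and the mass vector m) is
  annihilated by the reaction term, so y = w \<bullet> A only feels the nutrient influx, which is
  bounded above on nonnegative states, and two nonpositive terms: the membrane drain and the
  dilution -\<lambda>(A) y. Positive lower bounds on the species of S_me bound the growth rate \<lambda>(A)
  below by some \<lambda>0 > 0, so y' \<le> C - \<lambda>0 y and y stays below max (y 0) (C / \<lambda>0).\<close>

lemma linear_decay_comparison:
  fixes y d :: "real \<Rightarrow> real"
  assumes deriv: "\<And>t. 0 \<le> t \<Longrightarrow> (y has_real_derivative d t) (at t within {0..})"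
    and decay: "\<And>t. 0 \<le> t \<Longrightarrow> d t \<le> C - l * y t"
    and l: "0 < l" and t: "0 \<le> t"
  shows "y t \<le> max (y 0) (C / l)"
proof (rule ccontr)
  define K where "K = max (y 0) (C / l)"
  assume "\<not> y t \<le> max (y 0) (C / l)"
  then have yt: "K < y t" by (auto simp: K_def)
  have cont: "continuous_on {0..t} y"
    using deriv by (intro DERIV_continuous_on[where D = d]) (auto intro: DERIV_subset[of y _ _ "{0..}"])
  \<comment> \<open>After the last time s0 \<le> t with y s0 \<le> K we have y > K, hence y' < 0, contradicting y t > y s0.\<close>
  define T where "T = {0..t} \<inter> y -` {..K}"
  have "closed T"
    unfolding T_def by (rule continuous_closed_preimage[OF cont]) auto
  moreover have "0 \<in> T" "bdd_above T"
    using t by (auto simp: T_def K_def)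
  ultimately have s0T: "Sup T \<in> T"
    using closed_contains_Sup by blast
  define s0 where "s0 = Sup T"
  have s0: "0 \<le> s0" "y s0 \<le> K" "s0 < t"
    using s0T yt by (auto simp: s0_def T_def less_le)
  have above: "K < y x" if "s0 < x" "x \<le> t" for x
    using that s0 cSup_upper[OF _ \<open>bdd_above T\<close>, of x] by (force simp: s0_def T_def)
  have "(y has_derivative (*) (d x)) (at x within {s0..t})" if "s0 \<le> x" "x \<le> t" for x
    using deriv[of x] that s0 unfolding has_field_derivative_def
    by (auto intro: has_derivative_subset)
  then obtain \<xi> where \<xi>: "s0 < \<xi>" "\<xi> < t" "y t - y s0 = d \<xi> * (t - s0)"
    using mvt_simple[OF \<open>s0 < t\<close>, of y "\<lambda>x. (*) (d x)"] by auto
  have "C / l \<le> K"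
    by (simp add: K_def)
  then have "C \<le> l * K"
    using l by (simp add: pos_divide_le_eq mult.commute)
  then have "d \<xi> < 0"
    using decay[of \<xi>] above[of \<xi>] \<xi> s0 l by (smt (verit) mult_strict_left_mono)
  then show False
    using \<xi> s0 yt by (smt (verit) mult_neg_pos)
qed

lemma inner_nonneg_vec:
  fixes w x :: "real^'n"
  assumes "nonneg_vec w" "nonneg_vec x"
  shows "0 \<le> w \<bullet> x"
  using assms unfolding inner_vec_def nonneg_vec_def by (auto intro!: sum_nonneg)

lemma inner_fme_vec: "w \<bullet> fme_vec me fme x = w $ me * fme x"
  unfolding inner_vec_def fme_vec_def by (simp add: if_distrib cong: if_cong)

lemma pos_comb_moieties_in_cons_cone:
  assumes "moiety_set S B" "pos_comb_moieties B b"
  shows "b \<in> cons_cone S"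
  using assms unfolding moiety_set_def pos_comb_moieties_def nonneg_comb_def by blast

lemma nutrient_flux_le_flux_at_zero:
  assumes "nutrient_flux Snu fnu" "nonneg_vec x"
  shows "fnu x $ i \<le> fnu 0 $ i"
  using assms(1) unfolding nutrient_flux_def
proof (elim disjE exE conjE)
  fix Dc Aout K
  assume pos: "\<forall>i\<in>Snu. 0 < Dc i \<and> 0 < Aout i \<and> 0 < K i"
    and fnu: "\<forall>x. fnu x = (\<chi> i. if i \<in> Snu then Dc i * (Aout i - x $ i) / (1 + Aout i / K i) else 0)"
  show ?thesis
  proof (cases "i \<in> Snu")
    case True
    then have "0 < 1 + Aout i / K i" "Dc i * (Aout i - x $ i) \<le> Dc i * Aout i"
      using pos assms(2) by (auto simp: nonneg_vec_def mult_le_cancel_left add_pos_pos)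
    with True show ?thesis by (simp add: fnu divide_right_mono)
  qed (simp add: fnu)
qed simp

lemma nutrient_flux_inner_le:
  assumes "nutrient_flux Snu fnu" "nonneg_vec w" "nonneg_vec x"
  shows "w \<bullet> fnu x \<le> w \<bullet> fnu 0"
  using assms nutrient_flux_le_flux_at_zero unfolding inner_vec_def nonneg_vec_def
  by (auto intro!: sum_mono mult_left_mono)

lemma membrane_rate_bounded_below:
  fixes fme :: "real^'n \<Rightarrow> real"
  assumes fme: "membrane_rate Sme fme"
    and X: "\<forall>x\<in>X. nonneg_vec x"
    and lower: "\<forall>i\<in>Sme. \<exists>\<epsilon>>0. \<forall>x\<in>X. \<epsilon> \<le> x $ i"
  shows "\<exists>c>0. \<forall>x\<in>X. c \<le> fme x"
proof -
  obtain \<epsilon> where \<epsilon>: "\<forall>i\<in>Sme. 0 < \<epsilon> i \<and> (\<forall>x\<in>X. \<epsilon> i \<le> x $ i)"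
    using lower by metis
  define x0 :: "real^'n" where "x0 = (\<chi> i. if i \<in> Sme then \<epsilon> i else 0)"
  have "nonneg_vec x0"
    using \<epsilon> by (auto simp: x0_def nonneg_vec_def less_imp_le)
  then have "0 < fme x0" "\<forall>x\<in>X. fme x0 \<le> fme x"
    using fme X \<epsilon> unfolding membrane_rate_def by (auto simp: x0_def)
  then show ?thesis by blast
qed

lemma cons_cone_inner_bounded_above:
  fixes S :: "real^'r::finite^'n::finite" and A :: "real \<Rightarrow> real^'n"
  assumes w: "w \<in> cons_cone S"
    and fnu_ok: "nutrient_flux Snu fnu"
    and Cme_pos: "0 < Cme"
    and c: "0 < c" "\<forall>t\<ge>0. c \<le> fme (A t)"
    and A_nonneg: "\<forall>t\<ge>0. nonneg_vec (A t)"
    and ode: "\<forall>t\<ge>0. (A has_vector_derivative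
               (S *v f (A t) + fnu (A t) - fme_vec me fme (A t) - (fme (A t) / Cme) *\<^sub>R A t))
               (at t within {0..})"
  shows "\<exists>M. \<forall>t\<ge>0. w \<bullet> A t \<le> M"
proof -
  have wnn: "nonneg_vec w" and wS: "w v* S = 0"
    using w by (auto simp: cons_cone_def)
  define y where "y t = w \<bullet> A t" for t
  define d where "d t = w \<bullet> fnu (A t) - w $ me * fme (A t) - (fme (A t) / Cme) * y t" for t
  have deriv: "(y has_real_derivative d t) (at t within {0..})" if "0 \<le> t" for t
  proof -
    have "(y has_vector_derivative
            w \<bullet> (S *v f (A t) + fnu (A t) - fme_vec me fme (A t) - (fme (A t) / Cme) *\<^sub>R A t))
            (at t within {0..})"
      unfolding y_def using ode that
      by (auto simp: has_vector_derivative_def intro: has_derivative_eq_rhs[OF has_derivative_inner_right])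
    moreover have "w \<bullet> (S *v f (A t)) = 0"
      using wS by (simp flip: dot_lmul_matrix)
    ultimately show ?thesis
      by (simp add: has_real_derivative_iff_has_vector_derivative d_def y_def
          inner_diff_right inner_add_right inner_fme_vec)
  qed
  have decay: "d t \<le> w \<bullet> fnu 0 - (c / Cme) * y t" if "0 \<le> t" for t
  proof -
    have "0 \<le> w $ me * fme (A t)"
      using wnn c that by (smt (verit) nonneg_vec_def mult_nonneg_nonneg)
    moreover have "(c / Cme) * y t \<le> (fme (A t) / Cme) * y t"
      using c that Cme_pos inner_nonneg_vec[OF wnn] A_nonneg
      by (auto simp: y_def intro!: mult_right_mono divide_right_mono)
    moreover have "w \<bullet> fnu (A t) \<le> w \<bullet> fnu 0"
      using nutrient_flux_inner_le[OF fnu_ok wnn] A_nonneg that by blast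
    ultimately show ?thesis by (simp add: d_def)
  qed
  show ?thesis
    using linear_decay_comparison[OF deriv decay] c Cme_pos by (auto simp: y_def)
qed

theorem mainTheorem3:
  fixes S :: "real^'r::finite^'n::finite"
    and m :: "real^'n"
    and B :: "(real^'n) set"
    and b :: "real^'n"
    and f :: "real^'n \<Rightarrow> real^'r"
    and me :: 'n
    and Sme Snu :: "'n set"
    and fme :: "real^'n \<Rightarrow> real"
    and Cme :: real
    and fnu :: "real^'n \<Rightarrow> real^'n"
    and A :: "real \<Rightarrow> real^'n"
  assumes m_pos: "\<forall>i. 0 < m $ i"
    and m_cons: "m v* S = 0"
    and moieties: "moiety_set S B"
    and b_comb: "pos_comb_moieties B b"
    and f_nonneg: "\<forall>x. nonneg_vec (f x)"
    and me_in: "me \<in> Sme"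
    and fme_ok: "membrane_rate Sme fme"
    and Cme_pos: "0 < Cme"
    and fnu_ok: "nutrient_flux Snu fnu"
    and fed: "Snu \<inter> supp b \<noteq> {}"
    and A_nonneg: "\<forall>t\<ge>0. nonneg_vec (A t)"
    and ode: "\<forall>t\<ge>0. (A has_vector_derivative
               (S *v f (A t) + fnu (A t) - fme_vec me fme (A t) - (fme (A t) / Cme) *\<^sub>R A t))
               (at t within {0..})"
    and lower: "\<forall>i\<in>Sme. \<exists>\<epsilon>>0. \<forall>t\<ge>0. \<epsilon> \<le> A t $ i"
  shows "(\<exists>M. \<forall>t\<ge>0. b \<bullet> A t \<le> M) \<and> (\<exists>M. \<forall>t\<ge>0. \<bar>m \<bullet> A t\<bar> \<le> M)"
proof -
  obtain c where c: "0 < c" "\<forall>t\<ge>0. c \<le> fme (A t)"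
    using membrane_rate_bounded_below[OF fme_ok, of "A ` {0..}"] A_nonneg lower by fastforce
  note bounded = cons_cone_inner_bounded_above[OF _ fnu_ok Cme_pos c A_nonneg ode]
  have m_nonneg: "nonneg_vec m"
    using m_pos by (simp add: nonneg_vec_def less_imp_le)
  have "b \<in> cons_cone S" "m \<in> cons_cone S"
    using pos_comb_moieties_in_cons_cone[OF moieties b_comb] m_nonneg m_cons
    by (auto simp: cons_cone_def)
  then show ?thesis
    using bounded inner_nonneg_vec[OF m_nonneg] A_nonneg by (metis abs_of_nonneg)
qed

end
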